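(* Let $1<p<\infty$, $\delta\in(\max\{1-\frac1d,1-\frac1p\},1)$, $h\ge0$, $j\in\{1,\dots,d\}$, and let $E\subset(0,\infty)$ be measurable such that for some $C_0>0$ $$h_{\tau(s)}(x,y)\le C_0\,s^{-d/2}e^{|x|^2-|y|^2-\frac{\delta}{4s}Q_s(x,y)},\qquad x,y\in\mathbb{R}^d,\ s\in\tau^{-1}(E).$$ Put $Z(x,y)=\int_E|\partial_{x_j}h_u(x,y)|\frac{du}{\sqrt{u+h}}$. Then: (a) for every $\eta\in(0,1)$ there is $C>0$ with $Z(x,y)\le Ce^{\eta(1-\delta)|x|^2-\eta|y|^2}$ for all $(x,y)\in G_1$ with $\langle x,y\rangle<0$; (b) for every $\eta\in(0,1)$ with $\eta\delta>1-\frac1d$ there is $C>0$ with $Z(x,y)\le C|x+y|^d e^{\eta(1-\frac{\delta}{2})(|x|^2-|y|^2)-\frac{\eta\delta}{2}|x+y||x-y|}$ for all $(x,y)\in G_1$ with $\langle x,y\rangle\ge0$.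
   Context: $d\ge1$. $R$ is a real $d\times d$ skew-adjoint matrix, $B_1=-(I+R)$, $h_u(x,y)=(\pi(1-e^{-2u}))^{-d/2}\exp(-|e^{uB_1}x-y|^2/(1-e^{-2u}))$ for $u>0$. $\tau(s)=\log\frac{1+s}{1-s}$, $s\in(0,1)$ (a bijection onto $(0,\infty)$), and $Q_s(x,y)=|(1+s)x-(1-s)y|^2$. $L_1=\{(x,y):|x-y|\le\min\{1,|x+y|^{-1}\}\}$ and $G_1=(\mathbb{R}^d\times\mathbb{R}^d)\setminus L_1$. *)

theory Defs
  imports "HOL-Analysis.Analysis"
begin

fun matpow :: "real^'n^'n \<Rightarrow> nat \<Rightarrow> real^'n^'n" where
  "matpow A 0 = mat 1"
| "matpow A (Suc k) = A ** matpow A k"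

definition mexp :: "real^'n^'n \<Rightarrow> real^'n^'n" where
  "mexp A = (\<Sum>k. (1 / fact k) *\<^sub>R matpow A k)"

definition B1 :: "real^'n^'n \<Rightarrow> real^'n^'n" where
  "B1 R = - (mat 1 + R)"

text \<open>Kernel h_u(x,y), for u > 0, with d = CARD('n).\<close>
definition hker :: "real^'n^'n \<Rightarrow> real \<Rightarrow> real^'n \<Rightarrow> real^'n \<Rightarrow> real" where
  "hker R u x y =
     (pi * (1 - exp (-2*u))) powr (- real CARD('n) / 2) *
     exp (- (norm (mexp (u *\<^sub>R B1 R) *v x - y))\<^sup>2 / (1 - exp (-2*u)))"

definition dhker :: "real^'n^'n \<Rightarrow> 'n \<Rightarrow> real \<Rightarrow> real^'n \<Rightarrow> real^'n \<Rightarrow> real" where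
  "dhker R j u x y = deriv (\<lambda>t. hker R u (x + t *\<^sub>R axis j 1) y) 0"

definition tau :: "real \<Rightarrow> real" where
  "tau s = ln ((1 + s) / (1 - s))"

definition Qs :: "real \<Rightarrow> real^'n \<Rightarrow> real^'n \<Rightarrow> real" where
  "Qs s x y = (norm ((1 + s) *\<^sub>R x - (1 - s) *\<^sub>R y))\<^sup>2"

text \<open>L_1 = {|x-y| <= min(1, |x+y|^{-1})}, written without division
  (|x+y|^{-1} = infinity when x+y = 0); G_1 is its complement.\<close>
definition L1 :: "((real^'n) \<times> (real^'n)) set" where
  "L1 = {(x, y). norm (x - y) \<le> 1 \<and> norm (x - y) * norm (x + y) \<le> 1}"

definition G1 :: "((real^'n) \<times> (real^'n)) set" where
  "G1 = UNIV - L1"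

definition Zfun :: "real^'n^'n \<Rightarrow> 'n \<Rightarrow> real set \<Rightarrow> real \<Rightarrow> real^'n \<Rightarrow> real^'n \<Rightarrow> ennreal" where
  "Zfun R j E h x y =
     (\<integral>\<^sup>+ u \<in> E. ennreal (\<bar>dhker R j u x y\<bar> / sqrt (u + h)) \<partial>lebesgue)"

end

theory Submission
  imports Defs
begin

text \<open>
  Differentiating the Gaussian \<open>h\<^sub>u\<close> in \<open>x\<^sub>j\<close> multiplies it by a factor linear in
  \<open>e\<^bsup>uB\<^sub>1\<^esub>x - y\<close>; since \<open>R\<close> is skew, \<open>e\<^bsup>uB\<^sub>1\<^esub>\<close> shrinks every vector by exactly \<open>e\<^sup>-\<^sup>u\<close>.
  Splitting \<open>h\<^sub>u = h\<^sub>u\<^sup>\<eta> h\<^sub>u\<^bsup>1-\<eta>\<^esub>\<close>, the first factor is controlled by the hypothesis and the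
  second absorbs the linear factor at the price of \<open>s\<^bsup>-1/2\<^esub>\<close>, where \<open>s = \<tau>\<^sup>-\<^sup>1(u)\<close>. So the
  integrand is at most a constant times \<open>e\<^sup>-\<^sup>u s\<^bsup>-d/2-1\<^esub>\<close> times
  \<open>exp (\<eta>(|x|\<^sup>2 - |y|\<^sup>2 - \<delta> Q\<^sub>s(x,y) / (4s)))\<close>.

  On \<open>G\<^sub>1\<close> with \<open>\<langle>x,y\<rangle> < 0\<close> one has \<open>|x+y| \<le> |x-y|\<close> and \<open>|x-y| \<ge> 1\<close>, and the exponent is at most
  the claimed one minus \<open>(\<eta>\<delta>/4)(1-s)\<^sup>2/s\<close>, which kills the power of \<open>s\<close>; the factor \<open>e\<^sup>-\<^sup>u\<close>
  makes the \<open>u\<close>-integral finite. For \<open>\<langle>x,y\<rangle> \<ge> 0\<close> the exponent equals the claimed one minus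
  \<open>(\<eta>\<delta>/4)(|x-y| - s|x+y|)\<^sup>2/s\<close>; after substituting \<open>u = \<tau>(s)\<close> near \<open>0\<close>, rescaling \<open>s\<close> by
  \<open>|x-y|/|x+y|\<close> produces the factor \<open>(|x+y|/|x-y|)\<^bsup>d/2\<^esub> \<le> |x+y|\<^sup>d\<close>, using \<open>|x-y||x+y| \<ge> 1\<close>.
\<close>

section \<open>The matrix exponential of \<open>B\<^sub>1\<close>\<close>

lemma matrix_vector_mult_uminus_left: "(- A) *v x = - (A *v x)"
  for A :: "real^'n^'m"
  by (simp add: matrix_vector_mult_def vec_eq_iff sum_negf)

lemma matpow_scaleR: "matpow (c *\<^sub>R A) k = c ^ k *\<^sub>R matpow A k"
  by (induction k) (auto simp: matrix_scalar_ac scalar_matrix_assoc mult.commute)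

lemma norm_matpow_mult_le:
  assumes "\<And>w. norm (A *v w) \<le> norm w * K" and "0 \<le> K"
  shows "norm (matpow A k *v v) \<le> K ^ k * norm v"
proof (induction k)
  case (Suc k)
  have "norm (matpow A (Suc k) *v v) \<le> K * norm (matpow A k *v v)"
    using assms(1) by (simp add: matrix_vector_mul_assoc[symmetric] mult.commute)
  also have "\<dots> \<le> K * (K ^ k * norm v)"
    using Suc assms(2) by (simp add: mult_left_mono)
  finally show ?case by (simp add: mult.assoc)
qed simp

lemma norm_matrix_le_columns:
  "norm (M :: real^'n^'m) \<le> real CARD('m) * (\<Sum>l\<in>UNIV. norm (M *v axis l 1))"
proof -
  have entry: "\<bar>M $ i $ l\<bar> \<le> norm (M *v axis l 1)" for i l
  proof -
    have "M $ i $ l = (M *v axis l 1) $ i"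
      by (simp add: matrix_vector_mult_def axis_def if_distrib cong: if_cong)
    then show ?thesis by (metis component_le_norm_cart)
  qed
  have "norm M \<le> (\<Sum>i\<in>UNIV. norm (M $ i))"
    by (simp add: norm_vec_def L2_set_le_sum)
  also have "\<dots> \<le> (\<Sum>i\<in>(UNIV::'m set). \<Sum>l\<in>UNIV. norm (M *v axis l 1))"
  proof (rule sum_mono)
    fix i
    have "norm (M $ i) \<le> (\<Sum>l\<in>UNIV. \<bar>M $ i $ l\<bar>)"
      by (rule norm_le_l1_cart)
    also have "\<dots> \<le> (\<Sum>l\<in>UNIV. norm (M *v axis l 1))"
      by (intro sum_mono entry)
    finally show "norm (M $ i) \<le> (\<Sum>l\<in>UNIV. norm (M *v axis l 1))" .
  qed
  finally show ?thesis by simp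
qed

lemma summable_mexp_series: "summable (\<lambda>k. (1 / fact k) *\<^sub>R matpow (A::real^'n^'n) k)"
proof -
  obtain K where K: "K > 0" "\<And>w. norm (A *v w) \<le> norm w * K"
    using bounded_linear.pos_bounded[OF matrix_vector_mul_bounded_linear] by blast
  have "norm (matpow A k) \<le> real CARD('n) * real CARD('n) * K ^ k" for k
  proof -
    have "(\<Sum>l\<in>UNIV. norm (matpow A k *v axis l 1)) \<le> (\<Sum>l\<in>(UNIV::'n set). K ^ k)"
    proof (rule sum_mono)
      fix l :: 'n
      show "norm (matpow A k *v axis l 1) \<le> K ^ k"
        using norm_matpow_mult_le[OF K(2), of k "axis l 1"] K(1) by simp
    qed
    then have "real CARD('n) * (\<Sum>l\<in>UNIV. norm (matpow A k *v axis l 1)) \<le>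
        real CARD('n) * (real CARD('n) * K ^ k)"
      by (intro mult_left_mono) simp_all
    with norm_matrix_le_columns[of "matpow A k"] show ?thesis
      unfolding mult.assoc by (rule order_trans)
  qed
  then have "norm ((1 / fact k) *\<^sub>R matpow A k) \<le> real CARD('n) * real CARD('n) * (K ^ k / fact k)" for k
    by (simp add: divide_right_mono)
  moreover have "summable (\<lambda>k. real CARD('n) * real CARD('n) * (K ^ k / fact k))"
    using summable_exp[of K] by (intro summable_mult) (simp add: divide_inverse mult.commute)
  ultimately show ?thesis
    by (rule summable_comparison_test'[where N=0, rotated])
qed

lemma bounded_linear_matrix_vector_component:
  "bounded_linear (\<lambda>M::real^'n^'m. (M *v v) $ i)"
proof -
  have "linear (\<lambda>M::real^'n^'m. (M *v v) $ i)"
    by (rule linearI)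
       (simp_all add: matrix_vector_mult_def sum.distrib sum_distrib_left algebra_simps)
  then show ?thesis by (simp add: linear_conv_bounded_linear)
qed

lemma mexp_mult_component:
  "(mexp (t *\<^sub>R B) *v v) $ i = (\<Sum>k. ((matpow B k *v v) $ i / fact k) * t ^ k)"
proof -
  have "(mexp (t *\<^sub>R B) *v v) $ i = (\<Sum>k. ((1 / fact k) *\<^sub>R matpow (t *\<^sub>R B) k *v v) $ i)"
    unfolding mexp_def
    by (rule bounded_linear.suminf[OF bounded_linear_matrix_vector_component summable_mexp_series])
  then show ?thesis
    by (simp add: matpow_scaleR matrix_vector_mult_def sum_distrib_left sum_distrib_right
        sum_divide_distrib mult_ac)
qed

lemma summable_mexp_component_series:
  "summable (\<lambda>k. ((matpow (B::real^'n^'n) k *v v) $ i / fact k) * t ^ k)"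
proof -
  obtain K where K: "K > 0" "\<And>w. norm (B *v w) \<le> norm w * K"
    using bounded_linear.pos_bounded[OF matrix_vector_mul_bounded_linear] by blast
  have "norm (((matpow B k *v v) $ i / fact k) * t ^ k) \<le> norm v * ((K * \<bar>t\<bar>) ^ k / fact k)" for k
  proof -
    have "\<bar>(matpow B k *v v) $ i\<bar> \<le> K ^ k * norm v"
      using component_le_norm_cart norm_matpow_mult_le[OF K(2)] K(1) order_trans
      by (metis less_imp_le)
    then have "\<bar>(matpow B k *v v) $ i\<bar> * \<bar>t\<bar> ^ k \<le> K ^ k * norm v * \<bar>t\<bar> ^ k"
      by (simp add: mult_right_mono)
    then show ?thesis
      by (simp add: abs_mult power_abs power_mult_distrib divide_right_mono mult_ac)
  qed
  moreover have "summable (\<lambda>k. norm v * ((K * \<bar>t\<bar>) ^ k / fact k))"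
    using summable_exp[of "K * \<bar>t\<bar>"]
    by (intro summable_mult) (simp add: divide_inverse mult.commute)
  ultimately show ?thesis
    by (auto intro: summable_comparison_test'[where N=0])
qed

lemma has_real_derivative_mexp_component:
  "((\<lambda>t. (mexp (t *\<^sub>R B) *v v) $ i) has_real_derivative (B *v (mexp (t *\<^sub>R B) *v v)) $ i) (at t)"
proof -
  let ?c = "\<lambda>i k. (matpow B k *v v) $ i / fact k"
  have diffs_eq: "diffs (?c i) k * t ^ k = (\<Sum>l\<in>UNIV. B $ i $ l * (?c l k * t ^ k))" for k
  proof -
    have "diffs (?c i) k = (B *v (matpow B k *v v)) $ i / fact k"
      by (simp add: diffs_def divide_simps matrix_vector_mul_assoc)
    then show ?thesis
      by (simp add: matrix_vector_mult_def sum_divide_distrib[symmetric] sum_distrib_left mult_ac)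
  qed
  have "(\<Sum>k. diffs (?c i) k * t ^ k) = (\<Sum>l\<in>UNIV. \<Sum>k. B $ i $ l * (?c l k * t ^ k))"
    unfolding diffs_eq
    by (rule suminf_sum) (intro summable_mult summable_mexp_component_series)
  also have "\<dots> = (\<Sum>l\<in>UNIV. B $ i $ l * (\<Sum>k. ?c l k * t ^ k))"
    by (intro sum.cong refl suminf_mult summable_mexp_component_series)
  also have "\<dots> = (B *v (mexp (t *\<^sub>R B) *v v)) $ i"
    by (simp add: mexp_mult_component matrix_vector_mult_def[of B])
  finally have "(\<Sum>k. diffs (?c i) k * t ^ k) = (B *v (mexp (t *\<^sub>R B) *v v)) $ i" .
  with termdiffs_strong_converges_everywhere[OF summable_mexp_component_series, of B v i t]
  show ?thesis
    by (simp add: mexp_mult_component)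
qed

lemma mexp_zero_mult: "mexp (0 *\<^sub>R B) *v v = v"
  unfolding vec_eq_iff mexp_mult_component powser_zero by simp

lemma inner_skew_self:
  fixes R :: "real^'n^'n"
  assumes "transpose R = - R"
  shows "inner w (R *v w) = 0"
proof -
  have "inner w (R *v w) = inner (w v* R) w"
    by (rule dot_lmul_matrix[symmetric])
  also have "\<dots> = inner (transpose R *v w) w"
    by simp
  also have "\<dots> = - inner w (R *v w)"
    using assms by (simp add: matrix_vector_mult_uminus_left inner_commute)
  finally show ?thesis by simp
qed

text \<open>Skewness of \<open>R\<close> makes \<open>t \<mapsto> |e\<^bsup>tB\<^sub>1\<^esub>v|\<^sup>2 e\<^bsup>2t\<^esub>\<close> constant.\<close>
lemma norm_mexp_B1_mult:
  assumes skew: "transpose R = - R"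
  shows "norm (mexp (u *\<^sub>R B1 R) *v v) = exp (-u) * norm v"
proof -
  let ?G = "\<lambda>t. mexp (t *\<^sub>R B1 R) *v v"
  have sq_norm: "(norm x)\<^sup>2 = (\<Sum>i\<in>UNIV. (x $ i)\<^sup>2)" for x :: "real^'n"
    unfolding power2_norm_eq_inner inner_vec_def by (simp add: power2_eq_square)
  have B1_mult: "B1 R *v w = - (w + R *v w)" for w
    by (simp only: B1_def matrix_vector_mult_uminus_left matrix_vector_mult_add_rdistrib
        matrix_vector_mul_lid)
  have sq_norm_deriv: "((\<lambda>t. (\<Sum>i\<in>UNIV. (?G t $ i)\<^sup>2)) has_real_derivative
      -2 * (\<Sum>i\<in>UNIV. (?G t $ i)\<^sup>2)) (at t)" for t
  proof -
    have "((\<lambda>t. (\<Sum>i\<in>UNIV. (?G t $ i)\<^sup>2)) has_real_derivative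
        2 * inner (?G t) (B1 R *v ?G t)) (at t)"
      unfolding inner_vec_def sum_distrib_left
      by (intro DERIV_sum)
        (auto intro!: derivative_eq_intros has_real_derivative_mexp_component
          simp: power2_eq_square mult_ac)
    moreover have "inner (?G t) (B1 R *v ?G t) = - (\<Sum>i\<in>UNIV. (?G t $ i)\<^sup>2)"
      using inner_skew_self[OF skew, of "?G t"]
      by (simp add: B1_mult inner_add_right inner_diff_right sq_norm[symmetric] power2_norm_eq_inner)
    ultimately show ?thesis by simp
  qed
  have "((\<lambda>t. (\<Sum>i\<in>UNIV. (?G t $ i)\<^sup>2) * exp (2 * t)) has_real_derivative 0) (at t)" for t
    by (rule sq_norm_deriv[THEN DERIV_mult, THEN DERIV_cong]) (auto intro!: derivative_eq_intros)
  then have "(\<Sum>i\<in>UNIV. (?G u $ i)\<^sup>2) * exp (2 * u) = (\<Sum>i\<in>UNIV. (?G 0 $ i)\<^sup>2) * exp (2 * 0)"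
    by (intro DERIV_isconst_all) blast
  then have "(norm (?G u))\<^sup>2 * exp (2 * u) = (norm v)\<^sup>2"
    by (simp add: sq_norm[symmetric] mexp_zero_mult[of "B1 R", simplified])
  then have "(norm (?G u))\<^sup>2 = (exp (-u) * norm v)\<^sup>2"
    by (simp add: power_mult_distrib exp_minus field_simps power2_eq_square flip: exp_add)
  then show ?thesis by (simp add: power2_eq_iff_nonneg)
qed


section \<open>Pointwise bound for the derivative of the kernel\<close>

lemma dhker_eq_hker_mult:
  fixes R :: "real^'n^'n"
  assumes u: "u > 0"
  shows "dhker R j u x y = hker R u x y *
     (- 2 * inner (mexp (u *\<^sub>R B1 R) *v x - y) (mexp (u *\<^sub>R B1 R) *v axis j 1) / (1 - exp (-2*u)))"
proof -
  define a where "a = mexp (u *\<^sub>R B1 R) *v x - y"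
  define m where "m = mexp (u *\<^sub>R B1 R) *v axis j 1"
  define D where "D = 1 - exp (-2*u)"
  define c where "c = (pi * D) powr (- real CARD('n) / 2)"
  have D: "D \<noteq> 0" using u by (simp add: D_def)
  have hker_line: "hker R u (x + t *\<^sub>R axis j 1) y =
      c * exp (- ((norm a)\<^sup>2 + 2 * t * inner a m + t\<^sup>2 * (norm m)\<^sup>2) / D)" for t
  proof -
    have "mexp (u *\<^sub>R B1 R) *v (x + t *\<^sub>R axis j 1) - y = a + t *\<^sub>R m"
      by (simp add: a_def m_def matrix_vector_right_distrib matrix_vector_mult_scaleR)
    moreover have "(norm (a + t *\<^sub>R m))\<^sup>2 = (norm a)\<^sup>2 + 2 * t * inner a m + t\<^sup>2 * (norm m)\<^sup>2"
      unfolding power2_norm_eq_inner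
      by (simp add: inner_add_left inner_add_right inner_commute power2_eq_square algebra_simps)
    ultimately show ?thesis by (simp add: hker_def c_def D_def)
  qed
  have "((\<lambda>t. c * exp (- ((norm a)\<^sup>2 + 2 * t * inner a m + t\<^sup>2 * (norm m)\<^sup>2) / D))
      has_real_derivative c * exp (- (norm a)\<^sup>2 / D) * (- 2 * inner a m / D)) (at 0)"
    using D by (auto intro!: derivative_eq_intros simp: field_simps)
  then have "((\<lambda>t. hker R u (x + t *\<^sub>R axis j 1) y) has_real_derivative
      hker R u x y * (- 2 * inner a m / D)) (at 0)"
    using hker_line[of 0] by (simp add: hker_line)
  then show ?thesis
    unfolding dhker_def by (simp add: DERIV_imp_deriv a_def m_def D_def)
qed

lemma mult_exp_neg_square_div_le:
  fixes A D s \<beta> :: real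
  assumes "A \<ge> 0" "0 < s" "s \<le> D" "\<beta> > 0"
  shows "A / D * exp (- \<beta> * A\<^sup>2 / D) \<le> 1 / (2 * sqrt \<beta>) * s powr (-1/2)"
proof -
  have D: "D > 0" using assms by linarith
  define t where "t = A / sqrt D"
  have "2 * sqrt \<beta> * t \<le> 1 + \<beta> * t\<^sup>2"
    using assms zero_le_power2[of "1 - sqrt \<beta> * t"]
    by (simp add: power2_eq_square algebra_simps real_sqrt_mult_self)
  also have "\<dots> \<le> exp (\<beta> * t\<^sup>2)"
    using exp_ge_add_one_self[of "\<beta> * t\<^sup>2"] by simp
  finally have t_bound: "t * exp (- (\<beta> * t\<^sup>2)) \<le> 1 / (2 * sqrt \<beta>)"
    using assms by (simp add: exp_minus field_simps)
  have "A / D * exp (- \<beta> * A\<^sup>2 / D) = t * exp (- (\<beta> * t\<^sup>2)) * (1 / sqrt D)"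
    using D by (simp add: t_def power_divide field_simps)
  also have "\<dots> \<le> 1 / (2 * sqrt \<beta>) * (1 / sqrt s)"
    using t_bound D assms
    by (intro mult_mono divide_left_mono) (auto simp: t_def)
  also have "1 / sqrt s = s powr (-1/2)"
    using assms by (simp add: powr_minus_divide powr_half_sqrt[symmetric])
  finally show ?thesis .
qed

text \<open>\<open>H\<^sup>\<eta>\<close> is controlled by the hypothesis on \<open>H\<close>, while \<open>H\<^bsup>1-\<eta>\<^esub>\<close> absorbs the linear
  factor \<open>A\<close>.\<close>
lemma gaussian_mult_dist_le:
  fixes H A D s d \<eta> C0 X :: real
  assumes H: "H = (pi * D) powr (-d/2) * exp (- A\<^sup>2 / D)" and A: "A \<ge> 0"
    and s: "0 < s" "s \<le> D" and d: "d \<ge> 0" and \<eta>: "0 < \<eta>" "\<eta> < 1" and C0: "C0 > 0"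
    and H_le: "H \<le> C0 * s powr (-d/2) * exp X"
  shows "H * A / D \<le> C0 powr \<eta> / (2 * sqrt (1 - \<eta>)) * s powr (-d/2 - 1/2) * exp (\<eta> * X)"
proof -
  have D: "D > 0" using s by linarith
  have H_pos: "H > 0" using D H by simp
  have H_rest: "H powr (1 - \<eta>) = (pi * D) powr (-d * (1 - \<eta>) / 2) * exp (- (1 - \<eta>) * A\<^sup>2 / D)"
    by (simp add: H powr_mult powr_powr exp_powr_real mult_ac) (use D in \<open>simp add: field_simps\<close>)
  have "H powr (1 - \<eta>) * A / D = (pi * D) powr (-d * (1 - \<eta>) / 2) * (A / D * exp (- (1 - \<eta>) * A\<^sup>2 / D))"
    unfolding H_rest by simp
  also have "\<dots> \<le> s powr (-d * (1 - \<eta>) / 2) * (1 / (2 * sqrt (1 - \<eta>)) * s powr (-1/2))"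
  proof (rule mult_mono)
    show "(pi * D) powr (-d * (1 - \<eta>) / 2) \<le> s powr (-d * (1 - \<eta>) / 2)"
      using d \<eta> s D pi_gt3 by (intro powr_mono2') (auto intro: order_trans[of _ D])
    show "A / D * exp (- (1 - \<eta>) * A\<^sup>2 / D) \<le> 1 / (2 * sqrt (1 - \<eta>)) * s powr (-1/2)"
      using mult_exp_neg_square_div_le[OF A s, of "1 - \<eta>"] \<eta> by simp
  qed (use A D in auto)
  finally have rest_le: "H powr (1 - \<eta>) * A / D \<le>
      s powr (-d * (1 - \<eta>) / 2) * (1 / (2 * sqrt (1 - \<eta>)) * s powr (-1/2))" .
  have "H powr \<eta> \<le> (C0 * s powr (-d/2) * exp X) powr \<eta>"
    using H_le H_pos \<eta> by (intro powr_mono2) auto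
  also have "\<dots> = C0 powr \<eta> * s powr (-d * \<eta> / 2) * exp (\<eta> * X)"
    by (simp add: powr_mult powr_powr exp_powr_real mult_ac)
  finally have main_le: "H powr \<eta> \<le> C0 powr \<eta> * s powr (-d * \<eta> / 2) * exp (\<eta> * X)" .
  have "H * A / D = H powr \<eta> * (H powr (1 - \<eta>) * A / D)"
    using H_pos by (simp add: powr_add[symmetric])
  also have "\<dots> \<le> (C0 powr \<eta> * s powr (-d * \<eta> / 2) * exp (\<eta> * X)) *
      (s powr (-d * (1 - \<eta>) / 2) * (1 / (2 * sqrt (1 - \<eta>)) * s powr (-1/2)))"
    using A D by (intro mult_mono[OF main_le rest_le]) auto
  also have "\<dots> = C0 powr \<eta> / (2 * sqrt (1 - \<eta>)) *
      (s powr (-d * \<eta> / 2) * s powr (-d * (1 - \<eta>) / 2) * s powr (-1/2)) * exp (\<eta> * X)"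
    by (simp add: field_simps)
  also have "s powr (-d * \<eta> / 2) * s powr (-d * (1 - \<eta>) / 2) * s powr (-1/2) =
      s powr (-d * \<eta> / 2 + -d * (1 - \<eta>) / 2 + -1/2)"
    by (simp only: powr_add)
  also have "-d * \<eta> / 2 + -d * (1 - \<eta>) / 2 + -1/2 = -d/2 - 1/2"
    by (simp add: field_simps)
  finally show ?thesis .
qed

definition tau_inv :: "real \<Rightarrow> real" where
  "tau_inv u = (exp u - 1) / (exp u + 1)"

lemma tau_inv_measurable [measurable]: "tau_inv \<in> borel_measurable borel"
  unfolding tau_inv_def by measurable

lemma tau_inv_pos: "0 < u \<Longrightarrow> 0 < tau_inv u"
  by (simp add: tau_inv_def add_pos_pos)

lemma tau_inv_less_one: "tau_inv u < 1"
  by (simp add: tau_inv_def add_pos_pos)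

lemma tau_tau_inv: "tau (tau_inv u) = u"
proof -
  have "exp u + 1 > 0" by (simp add: add_pos_pos)
  then have "(1 + tau_inv u) / (1 - tau_inv u) = exp u"
    by (simp add: tau_inv_def divide_simps)
  then show ?thesis by (simp add: tau_def)
qed

lemma tau_inv_tau:
  assumes "0 \<le> t" "t < 1"
  shows "tau_inv (tau t) = t"
proof -
  have "exp (tau t) = (1 + t) / (1 - t)"
    using assms by (simp add: tau_def)
  moreover have "((1 + t) / (1 - t) - 1) / ((1 + t) / (1 - t) + 1) = t"
    using assms by (simp add: divide_simps)
  ultimately show ?thesis
    by (simp add: tau_inv_def)
qed

lemma tau_inv_le_self:
  assumes "0 \<le> u"
  shows "tau_inv u \<le> u"
proof -
  have "(exp u - 1) / (exp u + 1) \<le> 1 - 1 / exp u"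
    using assms by (simp add: divide_simps add_pos_pos) (simp add: algebra_simps)
  moreover have "1 - exp (-u) \<le> u"
    using exp_ge_add_one_self[of "-u"] by simp
  ultimately show ?thesis
    by (simp add: tau_inv_def exp_minus divide_inverse)
qed

lemma tau_inv_le_one_minus_exp:
  assumes "0 \<le> u"
  shows "tau_inv u \<le> 1 - exp (-2 * u)"
proof -
  define e where "e = exp u"
  have e: "e \<ge> 1" using assms by (simp add: e_def)
  have "exp (-2 * u) = 1 / (e * e)"
    by (simp add: e_def exp_minus inverse_eq_divide flip: exp_add)
  moreover have "(e - 1) / (e + 1) \<le> 1 - 1 / (e * e)"
  proof -
    have "e \<le> e * e" using e by simp
    then have "1 + e \<le> e * (e * 2)" using e by linarith
    then show ?thesis using e by (simp add: field_simps)
  qed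
  ultimately show ?thesis
    by (simp add: tau_inv_def e_def)
qed

lemma tau_inv_gt_half:
  assumes "ln 3 < u"
  shows "1/2 < tau_inv u"
proof -
  have "3 < exp u"
    using assms by (metis exp_less_cancel_iff exp_ln zero_less_numeral)
  then show ?thesis by (simp add: tau_inv_def field_simps)
qed

lemma dhker_div_sqrt_le:
  fixes R :: "real^'n^'n"
  assumes skew: "transpose R = - R" and u: "u > 0" and h: "h \<ge> 0"
    and \<eta>: "0 < \<eta>" "\<eta> < 1" and C0: "C0 > 0"
    and hker_le: "hker R u x y \<le> C0 * tau_inv u powr (- real CARD('n) / 2) * exp X"
  shows "\<bar>dhker R j u x y\<bar> / sqrt (u + h) \<le> C0 powr \<eta> / sqrt (1 - \<eta>) * exp (-u) *
    tau_inv u powr (- (real CARD('n) / 2 + 1)) * exp (\<eta> * X)"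
proof -
  define s where "s = tau_inv u"
  define a where "a = mexp (u *\<^sub>R B1 R) *v x - y"
  define m where "m = mexp (u *\<^sub>R B1 R) *v axis j 1"
  define D where "D = 1 - exp (-2*u)"
  define H where "H = hker R u x y"
  define d where "d = real CARD('n)"
  have s: "0 < s" "s \<le> D" "s \<le> u + h"
    using u h tau_inv_pos tau_inv_le_one_minus_exp tau_inv_le_self[of u]
    by (auto simp: s_def D_def)
  have D: "D > 0" using u by (simp add: D_def)
  have norm_m: "norm m = exp (-u)"
    using norm_mexp_B1_mult[OF skew, of u "axis j 1"] by (simp add: m_def)
  have H: "H = (pi * D) powr (-d/2) * exp (- (norm a)\<^sup>2 / D)"
    by (simp add: H_def hker_def D_def d_def a_def)
  have H_pos: "H > 0" using D H by simp
  have "\<bar>dhker R j u x y\<bar> = H * (2 * \<bar>inner a m\<bar>) / D"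
    using dhker_eq_hker_mult[OF u, of R j x y] H_pos D
    by (simp add: H_def a_def m_def D_def abs_mult abs_divide)
  also have "\<dots> \<le> H * (2 * (norm a * exp (-u))) / D"
    using H_pos D Cauchy_Schwarz_ineq2[of a m] norm_m
    by (intro divide_right_mono mult_left_mono) auto
  also have "\<dots> = 2 * exp (-u) * (H * norm a / D)" by simp
  also have "\<dots> \<le> 2 * exp (-u) *
      (C0 powr \<eta> / (2 * sqrt (1 - \<eta>)) * s powr (-d/2 - 1/2) * exp (\<eta> * X))"
    using gaussian_mult_dist_le[OF H _ s(1,2) _ \<eta> C0] hker_le
    by (intro mult_left_mono) (auto simp: H_def s_def d_def)
  finally have dhker_le: "\<bar>dhker R j u x y\<bar> \<le>
      C0 powr \<eta> / sqrt (1 - \<eta>) * exp (-u) * s powr (-d/2 - 1/2) * exp (\<eta> * X)"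
    by (simp add: mult_ac)
  have "\<bar>dhker R j u x y\<bar> / sqrt (u + h) \<le> \<bar>dhker R j u x y\<bar> / sqrt s"
    using s by (intro divide_left_mono) auto
  also have "\<dots> \<le> C0 powr \<eta> / sqrt (1 - \<eta>) * exp (-u) * s powr (-d/2 - 1/2) * exp (\<eta> * X) / sqrt s"
    using s by (intro divide_right_mono dhker_le) auto
  also have "\<dots> = C0 powr \<eta> / sqrt (1 - \<eta>) * exp (-u) * (s powr (-d/2 - 1/2) / sqrt s) * exp (\<eta> * X)"
    by simp
  also have "s powr (-d/2 - 1/2) / sqrt s = s powr (-d/2 - 1/2 - 1/2)"
    by (simp only: powr_diff[of s "-d/2 - 1/2" "1/2"] powr_half_sqrt[OF less_imp_le[OF s(1)]])
  also have "-d/2 - 1/2 - 1/2 = - (real CARD('n) / 2 + 1)"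
    by (simp add: d_def)
  finally show ?thesis
    unfolding s_def .
qed

section \<open>One-dimensional integrals\<close>

lemma powr_le_mult_exp:
  fixes y m \<beta> :: real
  assumes "0 < y" "0 < m" "0 < \<beta>"
  shows "y powr m \<le> (m / \<beta>) powr m * exp (\<beta> * y)"
proof -
  have "\<beta> * y / m \<le> exp (\<beta> * y / m)"
    using exp_ge_add_one_self[of "\<beta> * y / m"] by linarith
  then have "(\<beta> * y / m) powr m \<le> exp (\<beta> * y / m) powr m"
    using assms by (intro powr_mono2) auto
  also have "\<dots> = exp (\<beta> * y)"
    using assms by (simp add: exp_powr_real)
  finally have "(\<beta> / m) powr m * y powr m \<le> exp (\<beta> * y)"
    using assms by (simp add: powr_mult[symmetric] mult_ac)
  then have "(m / \<beta>) powr m * ((\<beta> / m) powr m * y powr m) \<le> (m / \<beta>) powr m * exp (\<beta> * y)"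
    by (intro mult_left_mono) auto
  moreover have "(m / \<beta>) powr m * (\<beta> / m) powr m = 1"
    using assms by (simp add: powr_mult[symmetric])
  ultimately show ?thesis
    by (simp add: mult.assoc[symmetric])
qed

text \<open>Since \<open>(1 - t)\<^sup>2 / t = 1/t - 2 + t\<close>, the singularity \<open>t\<^bsup>-k\<^esub>\<close> at \<open>0\<close> is killed by \<open>e\<^bsup>-\<alpha>/t\<^esub>\<close>.\<close>
lemma powr_neg_mult_exp_le:
  fixes \<alpha> k t :: real
  assumes \<alpha>: "0 < \<alpha>" and k: "0 < k" and t: "0 < t"
  shows "t powr (-k) * exp (-\<alpha> * (1 - t)\<^sup>2 / t) \<le> exp (2 * \<alpha>) * (k / \<alpha>) powr k * exp (-\<alpha> * t)"
proof -
  have "-\<alpha> * (1 - t)\<^sup>2 / t = 2 * \<alpha> + -\<alpha> * t + - (\<alpha> * (1 / t))"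
    using t by (simp add: power2_eq_square field_simps)
  then have split: "exp (-\<alpha> * (1 - t)\<^sup>2 / t) = exp (2 * \<alpha>) * exp (-\<alpha> * t) * exp (- (\<alpha> * (1 / t)))"
    by (simp only: exp_add)
  have "t powr (-k) = (1 / t) powr k"
    using t by (simp add: powr_minus_divide powr_divide)
  also have "\<dots> \<le> (k / \<alpha>) powr k * exp (\<alpha> * (1 / t))"
    using t k \<alpha> by (intro powr_le_mult_exp) auto
  finally have "t powr (-k) * exp (-\<alpha> * (1 - t)\<^sup>2 / t) \<le>
      (k / \<alpha>) powr k * exp (\<alpha> * (1 / t)) * (exp (2 * \<alpha>) * exp (-\<alpha> * t) * exp (- (\<alpha> * (1 / t))))"
    unfolding split by (intro mult_right_mono) auto
  also have "\<dots> = exp (2 * \<alpha>) * (k / \<alpha>) powr k * exp (-\<alpha> * t)"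
    by (simp add: exp_minus field_simps)
  finally show ?thesis .
qed

lemma nn_integral_mult_exp_neg_le:
  fixes a c :: real
  assumes "0 \<le> c" "0 < a"
  shows "(\<integral>\<^sup>+ x \<in> {0<..}. ennreal (c * exp (-a * x)) \<partial>lborel) \<le> ennreal (c / a)"
proof -
  have "((\<lambda>x. c * exp (-a * x)) has_integral c * (exp (-a * 0) / a)) {0..}"
    by (intro has_integral_mult_right has_integral_exp_minus_to_infinity) (rule assms)
  then have "(\<integral>\<^sup>+ x \<in> {0..}. ennreal (c * exp (-a * x)) \<partial>lborel) = ennreal (c / a)"
    using assms by (subst nn_integral_has_integral_lebesgue') auto
  moreover have "(\<integral>\<^sup>+ x \<in> {0<..}. ennreal (c * exp (-a * x)) \<partial>lborel) \<le>
      (\<integral>\<^sup>+ x \<in> {0..}. ennreal (c * exp (-a * x)) \<partial>lborel)"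
    by (intro nn_integral_mono) (auto split: split_indicator)
  ultimately show ?thesis by simp
qed

lemma has_real_derivative_tau:
  assumes "0 \<le> t" "t < 1"
  shows "(tau has_real_derivative 2 / (1 - t\<^sup>2)) (at t)"
proof -
  have "(tau has_real_derivative inverse ((1 + t) / (1 - t)) * (2 / ((1 - t) * (1 - t)))) (at t)"
    unfolding tau_def[abs_def] using assms
    by (auto intro!: derivative_eq_intros simp: divide_simps)
  moreover have "t * t < 1"
    using assms mult_left_le_one_le[of t t] by linarith
  then have "inverse ((1 + t) / (1 - t)) * (2 / ((1 - t) * (1 - t))) = 2 / (1 - t\<^sup>2)"
    using assms by (simp add: divide_simps power2_eq_square) (simp add: algebra_simps)
  ultimately show ?thesis by simp
qed

text \<open>Substituting \<open>u = \<tau>(t)\<close>, where \<open>d\<tau>/dt = 2/(1 - t\<^sup>2) \<le> 3\<close> on \<open>[0, 1/2]\<close>.\<close>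
lemma nn_integral_tau_inv_le:
  fixes F :: "real \<Rightarrow> real"
  assumes F_meas [measurable]: "F \<in> borel_measurable borel" and F_nonneg: "\<And>t. 0 \<le> F t" and F0: "F 0 = 0"
  shows "(\<integral>\<^sup>+ u \<in> {0..ln 3}. ennreal (F (tau_inv u)) \<partial>lborel) \<le>
    3 * (\<integral>\<^sup>+ t \<in> {0<..}. ennreal (F t) \<partial>lborel)"
proof -
  have sq_le: "t\<^sup>2 \<le> 1/4" if "t \<in> {0..1/2}" for t :: real
    using that power_mono[of t "1/2" 2] by (simp add: power2_eq_square)
  have "(\<integral>\<^sup>+ u \<in> {tau 0..tau (1/2)}. ennreal (F (tau_inv u)) \<partial>lborel) =
      (\<integral>\<^sup>+ t. ennreal (F (tau_inv (tau t))) * ennreal (2 / (1 - t\<^sup>2)) * indicator {0..1/2} t \<partial>lborel)"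
  proof (rule nn_integral_substitution_aux)
    show "continuous_on {0..1/2::real} (\<lambda>t. 2 / (1 - t\<^sup>2))"
      using sq_le by (intro continuous_intros) force
    show "0 \<le> 2 / (1 - t\<^sup>2)" if "t \<in> {0..1/2}" for t :: real
      using sq_le[OF that] by simp
  qed (use F_meas in \<open>auto intro: has_real_derivative_tau\<close>)
  also have "\<dots> \<le> (\<integral>\<^sup>+ t. 3 * (ennreal (F t) * indicator {0<..} t) \<partial>lborel)"
  proof (intro nn_integral_mono)
    fix t :: real
    show "ennreal (F (tau_inv (tau t))) * ennreal (2 / (1 - t\<^sup>2)) * indicator {0..1/2} t \<le>
        3 * (ennreal (F t) * indicator {0<..} t)"
    proof (cases "t \<in> {0<..1/2}")
      case True
      then have "2 / (1 - t\<^sup>2) \<le> 3"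
        using sq_le[of t] by (simp add: field_simps)
      then have "ennreal (F t) * ennreal (2 / (1 - t\<^sup>2)) \<le> ennreal (F t) * ennreal 3"
        by (intro mult_left_mono ennreal_leI) auto
      then show ?thesis
        using True by (simp add: tau_inv_tau mult.commute)
    qed (auto simp: F0 tau_inv_tau split: split_indicator)
  qed
  also have "\<dots> = 3 * (\<integral>\<^sup>+ t \<in> {0<..}. ennreal (F t) \<partial>lborel)"
    by (rule nn_integral_cmult) measurable
  finally show ?thesis
    by (simp add: tau_def)
qed

lemma nn_integral_exp_neg_tau_inv_le:
  fixes F :: "real \<Rightarrow> real"
  assumes F_meas [measurable]: "F \<in> borel_measurable borel" and F_nonneg: "\<And>t. 0 \<le> F t" and F0: "F 0 = 0"
    and F_le: "\<And>t. 1/2 \<le> t \<Longrightarrow> F t \<le> B"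
  shows "(\<integral>\<^sup>+ u \<in> {0<..}. ennreal (exp (-u) * F (tau_inv u)) \<partial>lborel) \<le>
    3 * (\<integral>\<^sup>+ t \<in> {0<..}. ennreal (F t) \<partial>lborel) + ennreal B"
proof -
  have B: "0 \<le> B"
    using F_nonneg[of 1] F_le[of 1] by simp
  have "(\<integral>\<^sup>+ u \<in> {0<..}. ennreal (exp (-u) * F (tau_inv u)) \<partial>lborel) \<le>
      (\<integral>\<^sup>+ u. ennreal (F (tau_inv u)) * indicator {0..ln 3} u +
        ennreal (B * exp (-1 * u)) * indicator {0<..} u \<partial>lborel)"
  proof (intro nn_integral_mono)
    fix u :: real
    show "ennreal (exp (-u) * F (tau_inv u)) * indicator {0<..} u \<le>
        ennreal (F (tau_inv u)) * indicator {0..ln 3} u + ennreal (B * exp (-1 * u)) * indicator {0<..} u"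
    proof (cases "0 < u")
      case True
      have "exp (-u) * F (tau_inv u) \<le> F (tau_inv u) * indicator {0..ln 3} u + B * exp (-1 * u)"
      proof (cases "u \<le> ln 3")
        case True
        then show ?thesis
          using \<open>0 < u\<close> F_nonneg[of "tau_inv u"] B
            mult_left_le_one_le[of "F (tau_inv u)" "exp (-u)"]
          by (simp add: mult.commute add_increasing2)
      next
        case False
        then show ?thesis
          using F_le[OF less_imp_le[OF tau_inv_gt_half]] by (simp add: mult.commute)
      qed
      then have "ennreal (exp (-u) * F (tau_inv u)) \<le>
          ennreal (F (tau_inv u) * indicator {0..ln 3} u) + ennreal (B * exp (-1 * u))"
        using F_nonneg[of "tau_inv u"] B by (simp add: ennreal_leI flip: ennreal_plus)
      then show ?thesis
        using True by (cases "u \<le> ln 3") (simp_all add: indicator_def)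
    qed simp
  qed
  also have "\<dots> = (\<integral>\<^sup>+ u \<in> {0..ln 3}. ennreal (F (tau_inv u)) \<partial>lborel) +
      (\<integral>\<^sup>+ u \<in> {0<..}. ennreal (B * exp (-1 * u)) \<partial>lborel)"
  proof (rule nn_integral_add)
    show "(\<lambda>u. ennreal (F (tau_inv u)) * indicator {0..ln 3} u) \<in> borel_measurable lborel"
      by measurable
    show "(\<lambda>u. ennreal (B * exp (-1 * u)) * indicator {0<..} u) \<in> borel_measurable lborel"
      by measurable
  qed
  also have "\<dots> \<le> 3 * (\<integral>\<^sup>+ t \<in> {0<..}. ennreal (F t) \<partial>lborel) + ennreal (B / 1)"
    by (rule add_mono[OF nn_integral_tau_inv_le[OF F_meas F_nonneg F0]
          nn_integral_mult_exp_neg_le[OF B, of 1]]) simp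
  finally show ?thesis by simp
qed

text \<open>Rescaling \<open>t = (a/b) x\<close> turns the exponent into \<open>-\<alpha> a b (1 - x)\<^sup>2 / x\<close>, and \<open>a b \<ge> 1\<close>.\<close>
lemma nn_integral_powr_neg_mult_exp_le:
  fixes a b \<alpha> k :: real
  assumes a: "0 < a" and b: "0 < b" and ab: "1 \<le> a * b" and \<alpha>: "0 < \<alpha>" and k: "0 < k"
  shows "(\<integral>\<^sup>+ t \<in> {0<..}. ennreal (t powr (-k) * exp (-\<alpha> * (a - b * t)\<^sup>2 / t)) \<partial>lborel) \<le>
    ennreal ((a / b) powr (1 - k) * (exp (2 * \<alpha>) * (k / \<alpha>) powr k) / \<alpha>)"
proof -
  define c where "c = a / b"
  define M where "M = exp (2 * \<alpha>) * (k / \<alpha>) powr k"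
  have c: "c > 0" using a b by (simp add: c_def)
  define g where "g t = ennreal (t powr (-k) * exp (-\<alpha> * (a - b * t)\<^sup>2 / t)) * indicator {0<..} t" for t
  have "g \<in> borel_measurable borel"
    unfolding g_def by measurable
  then have "(\<integral>\<^sup>+ t. g t \<partial>lborel) = ennreal \<bar>c\<bar> * (\<integral>\<^sup>+ x. g (0 + c * x) \<partial>lborel)"
    using c by (intro nn_integral_real_affine) auto
  also have "(\<integral>\<^sup>+ x. g (0 + c * x) \<partial>lborel) \<le>
      (\<integral>\<^sup>+ x \<in> {0<..}. ennreal (c powr (-k) * M * exp (-\<alpha> * x)) \<partial>lborel)"
  proof (intro nn_integral_mono)
    fix x :: real
    show "g (0 + c * x) \<le> ennreal (c powr (-k) * M * exp (-\<alpha> * x)) * indicator {0<..} x"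
    proof (cases "x > 0")
      case True
      have "(a - b * (c * x))\<^sup>2 / (c * x) = a * b * ((1 - x)\<^sup>2 / x)"
        using a b True by (simp add: c_def power2_eq_square field_simps)
      moreover have "(1 - x)\<^sup>2 / x \<le> a * b * ((1 - x)\<^sup>2 / x)"
        using ab True mult_right_mono[of 1 "a * b" "(1 - x)\<^sup>2 / x"] by simp
      ultimately have "\<alpha> * ((1 - x)\<^sup>2 / x) \<le> \<alpha> * ((a - b * (c * x))\<^sup>2 / (c * x))"
        using \<alpha> by (intro mult_left_mono) auto
      then have "exp (-\<alpha> * (a - b * (c * x))\<^sup>2 / (c * x)) \<le> exp (-\<alpha> * (1 - x)\<^sup>2 / x)"
        by simp
      then have "(c * x) powr (-k) * exp (-\<alpha> * (a - b * (c * x))\<^sup>2 / (c * x)) \<le>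
          c powr (-k) * (x powr (-k) * exp (-\<alpha> * (1 - x)\<^sup>2 / x))"
        using c True by (simp add: powr_mult mult.assoc mult_left_mono)
      also have "\<dots> \<le> c powr (-k) * (M * exp (-\<alpha> * x))"
        using powr_neg_mult_exp_le[OF \<alpha> k True] by (intro mult_left_mono) (auto simp: M_def)
      finally show ?thesis
        using True c by (simp add: g_def ennreal_leI mult.assoc)
    qed (use c in \<open>simp add: g_def zero_less_mult_iff\<close>)
  qed
  also have "\<dots> \<le> ennreal (c powr (-k) * M / \<alpha>)"
    using \<alpha> by (intro nn_integral_mult_exp_neg_le) (auto simp: M_def)
  finally have "(\<integral>\<^sup>+ t. g t \<partial>lborel) \<le> ennreal c * ennreal (c powr (-k) * M / \<alpha>)"
    using c by (simp add: mult_left_mono)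
  also have "\<dots> = ennreal (c * (c powr (-k) * M / \<alpha>))"
    using c \<alpha> by (subst ennreal_mult[symmetric]) (auto simp: M_def)
  finally have "(\<integral>\<^sup>+ t. g t \<partial>lborel) \<le> ennreal (c * (c powr (-k) * M / \<alpha>))" .
  also have "c * (c powr (-k) * M / \<alpha>) = (a / b) powr (1 - k) * M / \<alpha>"
  proof -
    have "c * c powr (-k) = c powr (1 - k)"
      using c by (simp add: powr_diff powr_minus_divide)
    then show ?thesis
      by (metis c_def mult.assoc times_divide_eq_right)
  qed
  finally show ?thesis
    unfolding g_def M_def .
qed

lemma ratio_powr_le_power:
  fixes a b :: real
  assumes a: "0 < a" and b: "0 < b" and ab: "1 \<le> a * b"
  shows "(a / b) powr (- real n / 2) \<le> b ^ n"
proof -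
  have "(a / b) powr (- real n / 2) = (b / a) powr (real n / 2)"
    using a b by (simp add: powr_minus_divide powr_divide)
  also have "\<dots> \<le> (b * b) powr (real n / 2)"
    using a b ab by (intro powr_mono2) (auto simp: field_simps)
  also have "\<dots> = b powr (real n / 2 + real n / 2)"
    using b by (simp add: powr_mult flip: powr_add)
  also have "\<dots> = b ^ n"
    using b by (simp add: powr_realpow)
  finally show ?thesis .
qed

lemma nn_integral_exp_neg_tau_inv_gaussian_le:
  fixes a b \<alpha> :: real and n :: nat
  defines "k \<equiv> real n / 2 + 1"
  assumes a: "0 < a" and b: "1 \<le> b" and ab: "1 \<le> a * b" and \<alpha>: "0 < \<alpha>"
  shows "(\<integral>\<^sup>+ u \<in> {0<..}. ennreal (exp (-u) *
      (tau_inv u powr (-k) * exp (-\<alpha> * (a - b * tau_inv u)\<^sup>2 / tau_inv u))) \<partial>lborel) \<le>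
    ennreal ((3 * (exp (2 * \<alpha>) * (k / \<alpha>) powr k) / \<alpha> + 2 powr k) * b ^ n)"
proof -
  define M where "M = exp (2 * \<alpha>) * (k / \<alpha>) powr k"
  define F where "F t = t powr (-k) * exp (-\<alpha> * (a - b * t)\<^sup>2 / t)" for t
  define X where "X = (a / b) powr (1 - k) * M / \<alpha>"
  have k: "0 < k"
    by (simp add: k_def add_nonneg_pos)
  have F_meas: "F \<in> borel_measurable borel"
    unfolding F_def by measurable
  have F_nonneg: "0 \<le> F t" for t
    by (simp add: F_def)
  have F_le: "F t \<le> 2 powr k" if "1/2 \<le> t" for t
  proof -
    have "t powr (-k) \<le> (1/2) powr (-k)"
      using that k by (intro powr_mono2') auto
    also have "\<dots> = 2 powr k"
      by (simp add: powr_minus_divide powr_divide)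
    finally have "t powr (-k) * exp (-\<alpha> * (a - b * t)\<^sup>2 / t) \<le> 2 powr k * 1"
      using that \<alpha> by (intro mult_mono) (auto simp: divide_nonneg_pos)
    then show ?thesis by (simp add: F_def)
  qed
  have X: "0 \<le> X" "X \<le> b ^ n * M / \<alpha>"
    using ratio_powr_le_power[of a b n] a b ab \<alpha>
    by (auto simp: X_def M_def k_def divide_right_mono)
  have "(\<integral>\<^sup>+ u \<in> {0<..}. ennreal (exp (-u) * F (tau_inv u)) \<partial>lborel) \<le>
      3 * (\<integral>\<^sup>+ t \<in> {0<..}. ennreal (F t) \<partial>lborel) + ennreal (2 powr k)"
    by (intro nn_integral_exp_neg_tau_inv_le F_meas F_nonneg F_le) (simp add: F_def)
  also have "\<dots> \<le> 3 * ennreal X + ennreal (2 powr k)"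
    using nn_integral_powr_neg_mult_exp_le[OF a _ ab \<alpha> k] b
    by (intro add_mono mult_left_mono) (auto simp: F_def M_def X_def)
  also have "\<dots> = ennreal (3 * X + 2 powr k)"
    using X by (simp add: ennreal_plus ennreal_mult')
  also have "\<dots> \<le> ennreal ((3 * M / \<alpha> + 2 powr k) * b ^ n)"
  proof (intro ennreal_leI)
    have "3 * X + 2 powr k \<le> 3 * (b ^ n * M / \<alpha>) + 2 powr k * b ^ n"
      using X b by (intro add_mono) (auto simp: one_le_power)
    also have "\<dots> = (3 * M / \<alpha> + 2 powr k) * b ^ n"
      by (simp add: algebra_simps)
    finally show "3 * X + 2 powr k \<le> (3 * M / \<alpha> + 2 powr k) * b ^ n" .
  qed
  finally show ?thesis
    unfolding F_def M_def .
qed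

section \<open>Geometry of \<open>G\<^sub>1\<close> and the exponent\<close>

lemma Qs_eq:
  fixes x y :: "real^'n"
  shows "Qs s x y = (norm (x - y))\<^sup>2 + 2 * s * ((norm x)\<^sup>2 - (norm y)\<^sup>2) + s\<^sup>2 * (norm (x + y))\<^sup>2"
proof -
  have "(1 + s) *\<^sub>R x - (1 - s) *\<^sub>R y = (x - y) + s *\<^sub>R (x + y)"
    by (simp add: algebra_simps)
  moreover have "(norm ((x - y) + s *\<^sub>R (x + y)))\<^sup>2 =
      (norm (x - y))\<^sup>2 + 2 * s * inner (x - y) (x + y) + s\<^sup>2 * (norm (x + y))\<^sup>2"
    unfolding power2_norm_eq_inner
    by (simp add: inner_add_left inner_add_right inner_commute power2_eq_square algebra_simps)
  moreover have "inner (x - y) (x + y) = (norm x)\<^sup>2 - (norm y)\<^sup>2"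
    unfolding power2_norm_eq_inner
    by (simp add: inner_add_left inner_add_right inner_diff_left inner_diff_right inner_commute)
  ultimately show ?thesis
    by (simp add: Qs_def)
qed

lemma norm_add_square_eq:
  fixes x y :: "'a::real_inner"
  shows "(norm (x + y))\<^sup>2 = (norm (x - y))\<^sup>2 + 4 * inner x y"
  unfolding power2_norm_eq_inner
  by (simp add: inner_add_left inner_add_right inner_diff_left inner_diff_right inner_commute)

lemma G1_obtuse_bounds:
  assumes "(x, y) \<in> G1" and "inner x y < 0"
  shows "(norm (x + y))\<^sup>2 \<le> (norm (x - y))\<^sup>2" and "1 \<le> (norm (x - y))\<^sup>2"
proof -
  show le: "(norm (x + y))\<^sup>2 \<le> (norm (x - y))\<^sup>2"
    using assms(2) norm_add_square_eq[of x y] by simp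
  show "1 \<le> (norm (x - y))\<^sup>2"
  proof (rule ccontr)
    assume "\<not> 1 \<le> (norm (x - y))\<^sup>2"
    then have diff_le: "norm (x - y) \<le> 1"
      by - (rule power2_le_imp_le, auto)
    moreover have "norm (x + y) \<le> norm (x - y)"
      using le by (rule power2_le_imp_le) simp
    ultimately have "norm (x - y) * norm (x + y) \<le> 1"
      using mult_mono[of "norm (x - y)" 1 "norm (x + y)" 1] by simp
    then show False
      using assms(1) diff_le by (simp add: G1_def L1_def)
  qed
qed

lemma G1_acute_bounds:
  assumes "(x, y) \<in> G1" and "0 \<le> inner x y"
  shows "1 \<le> norm (x - y) * norm (x + y)" and "0 < norm (x - y)" and "1 \<le> norm (x + y)"
proof -
  have le: "norm (x - y) \<le> norm (x + y)"
    using assms(2) norm_add_square_eq[of x y] by - (rule power2_le_imp_le, auto)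
  have prod: "1 < norm (x - y) * norm (x + y)"
  proof (cases "norm (x - y) \<le> 1")
    case True
    then show ?thesis
      using assms(1) by (simp add: G1_def L1_def)
  next
    case False
    then have "1 * 1 < norm (x - y) * norm (x + y)"
      using le by (intro mult_strict_mono) auto
    then show ?thesis by simp
  qed
  then show "1 \<le> norm (x - y) * norm (x + y)"
    by simp
  show "0 < norm (x - y)"
    using prod by (cases "x = y") auto
  show "1 \<le> norm (x + y)"
  proof (rule ccontr)
    assume "\<not> 1 \<le> norm (x + y)"
    then have "norm (x - y) * norm (x + y) \<le> 1"
      using le by (intro mult_le_one) auto
    with prod show False by simp
  qed
qed

lemma one_minus_square_div_le:
  fixes A B s :: real
  assumes "0 < s" "s < 1" "B \<le> A" "1 \<le> A"
  shows "(1 - s)\<^sup>2 / s \<le> A / s + s * B - A - B"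
proof -
  have "A / s + s * B - A - B - (1 - s)\<^sup>2 / s = (1 - s) / s * (A - s * B - (1 - s))"
    using assms by (simp add: field_simps power2_eq_square)
  moreover have "0 \<le> A - s * B - (1 - s)"
  proof -
    have "s * B \<le> s * A"
      using assms by (intro mult_left_mono) auto
    moreover have "(1 - s) * 1 \<le> (1 - s) * A"
      using assms by (intro mult_left_mono) auto
    ultimately show ?thesis
      by (simp add: algebra_simps)
  qed
  then have "0 \<le> (1 - s) / s * (A - s * B - (1 - s))"
    using assms by simp
  ultimately show ?thesis
    by linarith
qed

lemma exponent_le_obtuse:
  fixes x y :: "real^'n"
  assumes s: "0 < s" "s < 1" and \<eta>\<delta>: "0 \<le> \<eta> * \<delta>"
    and "(norm (x + y))\<^sup>2 \<le> (norm (x - y))\<^sup>2" and "1 \<le> (norm (x - y))\<^sup>2"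
  shows "\<eta> * ((norm x)\<^sup>2 - (norm y)\<^sup>2 - \<delta> / (4 * s) * Qs s x y) \<le>
    \<eta> * (1 - \<delta>) * (norm x)\<^sup>2 - \<eta> * (norm y)\<^sup>2 - \<eta> * \<delta> / 4 * ((1 - s)\<^sup>2 / s)"
proof -
  have parallelogram: "(norm (x + y))\<^sup>2 = 2 * (norm x)\<^sup>2 + 2 * (norm y)\<^sup>2 - (norm (x - y))\<^sup>2"
    unfolding power2_norm_eq_inner
    by (simp add: inner_add_left inner_add_right inner_diff_left inner_diff_right inner_commute)
  have "\<eta> * ((norm x)\<^sup>2 - (norm y)\<^sup>2 - \<delta> / (4 * s) * Qs s x y) =
      \<eta> * (1 - \<delta>) * (norm x)\<^sup>2 - \<eta> * (norm y)\<^sup>2 - \<eta> * \<delta> / 4 *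
        ((norm (x - y))\<^sup>2 / s + s * (norm (x + y))\<^sup>2 - (norm (x - y))\<^sup>2 - (norm (x + y))\<^sup>2)"
    unfolding Qs_eq parallelogram using s by (simp add: field_simps power2_eq_square)
  moreover have "\<eta> * \<delta> / 4 * ((1 - s)\<^sup>2 / s) \<le> \<eta> * \<delta> / 4 *
      ((norm (x - y))\<^sup>2 / s + s * (norm (x + y))\<^sup>2 - (norm (x - y))\<^sup>2 - (norm (x + y))\<^sup>2)"
    using assms one_minus_square_div_le by (intro mult_left_mono) auto
  ultimately show ?thesis by linarith
qed

lemma exponent_eq_acute:
  fixes x y :: "real^'n"
  assumes "0 < s"
  shows "\<eta> * ((norm x)\<^sup>2 - (norm y)\<^sup>2 - \<delta> / (4 * s) * Qs s x y) =
    \<eta> * (1 - \<delta> / 2) * ((norm x)\<^sup>2 - (norm y)\<^sup>2) - \<eta> * \<delta> / 2 * norm (x + y) * norm (x - y) -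
    \<eta> * \<delta> / 4 * ((norm (x - y) - norm (x + y) * s)\<^sup>2 / s)"
  using assms by (simp add: Qs_eq field_simps power2_eq_square)

lemma Zfun_le_nn_integral:
  assumes "E \<subseteq> {0<..}" and "\<And>u. u \<in> E \<Longrightarrow> \<bar>dhker R j u x y\<bar> / sqrt (u + h) \<le> g u"
  shows "Zfun R j E h x y \<le> (\<integral>\<^sup>+ u \<in> {0<..}. ennreal (g u) \<partial>lborel)"
  unfolding Zfun_def nn_integral_completion
  using assms by (intro nn_integral_mono) (auto simp: ennreal_leI split: split_indicator)

section \<open>The two bounds\<close>

locale hker_gaussian_bound =
  fixes R :: "real^'n^'n" and \<delta> h C0 :: real and E :: "real set"
  assumes skew: "transpose R = - R" and \<delta>_pos: "0 < \<delta>" and h_nonneg: "0 \<le> h"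
    and E_pos: "E \<subseteq> {0<..}" and C0_pos: "0 < C0"
    and hker_le: "\<And>x y s. 0 < s \<Longrightarrow> s < 1 \<Longrightarrow> tau s \<in> E \<Longrightarrow>
      hker R (tau s) x y \<le> C0 * s powr (- real CARD('n) / 2) *
        exp ((norm x)\<^sup>2 - (norm y)\<^sup>2 - \<delta> / (4 * s) * Qs s x y)"
begin

lemma dhker_integrand_le:
  assumes u: "u \<in> E" and \<eta>: "0 < \<eta>" "\<eta> < 1"
  shows "\<bar>dhker R j u x y\<bar> / sqrt (u + h) \<le> C0 powr \<eta> / sqrt (1 - \<eta>) * exp (-u) *
    tau_inv u powr (- (real CARD('n) / 2 + 1)) *
    exp (\<eta> * ((norm x)\<^sup>2 - (norm y)\<^sup>2 - \<delta> / (4 * tau_inv u) * Qs (tau_inv u) x y))"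
proof -
  have u_pos: "0 < u" using u E_pos by auto
  have "hker R u x y \<le> C0 * tau_inv u powr (- real CARD('n) / 2) *
      exp ((norm x)\<^sup>2 - (norm y)\<^sup>2 - \<delta> / (4 * tau_inv u) * Qs (tau_inv u) x y)"
    using hker_le[of "tau_inv u" x y] tau_inv_pos[OF u_pos] tau_inv_less_one u
    by (simp add: tau_tau_inv)
  then show ?thesis
    by (rule dhker_div_sqrt_le[OF skew u_pos h_nonneg \<eta> C0_pos])
qed

lemma Zfun_le_obtuse:
  assumes \<eta>: "0 < \<eta>" "\<eta> < 1"
  shows "\<exists>C>0. \<forall>x y. (x, y) \<in> G1 \<and> inner x y < 0 \<longrightarrow>
    Zfun R j E h x y \<le> ennreal (C * exp (\<eta> * (1 - \<delta>) * (norm x)\<^sup>2 - \<eta> * (norm y)\<^sup>2))"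
proof -
  define \<alpha> where "\<alpha> = \<eta> * \<delta> / 4"
  define k where "k = real CARD('n) / 2 + 1"
  define K where "K = C0 powr \<eta> / sqrt (1 - \<eta>)"
  define M where "M = exp (2 * \<alpha>) * (k / \<alpha>) powr k"
  have \<alpha>: "0 < \<alpha>" and k: "0 < k" and KM: "0 < K * M"
    using \<eta> \<delta>_pos C0_pos by (auto simp: \<alpha>_def k_def K_def M_def)
  have "Zfun R j E h x y \<le> ennreal (K * M * exp (\<eta> * (1 - \<delta>) * (norm x)\<^sup>2 - \<eta> * (norm y)\<^sup>2))"
    if xy: "(x, y) \<in> G1" "inner x y < 0" for x y
  proof -
    define T where "T = \<eta> * (1 - \<delta>) * (norm x)\<^sup>2 - \<eta> * (norm y)\<^sup>2"
    have pointwise: "\<bar>dhker R j u x y\<bar> / sqrt (u + h) \<le> K * M * exp T * exp (-1 * u)"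
      if u: "u \<in> E" for u
    proof -
      define s where "s = tau_inv u"
      have s: "0 < s" "s < 1"
        using u E_pos tau_inv_pos tau_inv_less_one by (auto simp: s_def)
      have "\<eta> * ((norm x)\<^sup>2 - (norm y)\<^sup>2 - \<delta> / (4 * s) * Qs s x y) \<le> T + -\<alpha> * (1 - s)\<^sup>2 / s"
        using exponent_le_obtuse[OF s _ G1_obtuse_bounds[OF xy], of \<eta> \<delta>] \<eta> \<delta>_pos
        by (simp add: T_def \<alpha>_def)
      then have "exp (\<eta> * ((norm x)\<^sup>2 - (norm y)\<^sup>2 - \<delta> / (4 * s) * Qs s x y)) \<le>
          exp T * exp (-\<alpha> * (1 - s)\<^sup>2 / s)"
        by (simp flip: exp_add)
      then have "K * exp (-u) * s powr (-k) * exp (\<eta> * ((norm x)\<^sup>2 - (norm y)\<^sup>2 - \<delta> / (4 * s) * Qs s x y)) \<le>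
          K * exp (-u) * s powr (-k) * (exp T * exp (-\<alpha> * (1 - s)\<^sup>2 / s))"
        using C0_pos \<eta> by (intro mult_left_mono) (auto simp: K_def)
      then have "\<bar>dhker R j u x y\<bar> / sqrt (u + h) \<le>
          K * exp (-u) * exp T * (s powr (-k) * exp (-\<alpha> * (1 - s)\<^sup>2 / s))"
        using dhker_integrand_le[OF u \<eta>, of j x y]
        by (simp add: K_def k_def s_def mult_ac)
      also have "\<dots> \<le> K * exp (-u) * exp T * (M * exp (-\<alpha> * s))"
        using powr_neg_mult_exp_le[OF \<alpha> k s(1)] C0_pos \<eta>
        by (intro mult_left_mono) (auto simp: M_def K_def)
      also have "\<dots> \<le> K * exp (-u) * exp T * M"
        using \<alpha> s C0_pos \<eta> by (intro mult_left_mono mult_right_le_one_le) (auto simp: M_def K_def)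
      finally show ?thesis
        by (simp add: mult_ac)
    qed
    have "Zfun R j E h x y \<le> (\<integral>\<^sup>+ u \<in> {0<..}. ennreal (K * M * exp T * exp (-1 * u)) \<partial>lborel)"
      by (rule Zfun_le_nn_integral[OF E_pos pointwise])
    also have "\<dots> \<le> ennreal (K * M * exp T / 1)"
      using KM by (intro nn_integral_mult_exp_neg_le) auto
    finally show ?thesis
      by (simp add: T_def)
  qed
  with KM show ?thesis by blast
qed

lemma Zfun_le_acute:
  assumes \<eta>: "0 < \<eta>" "\<eta> < 1"
  shows "\<exists>C>0. \<forall>x y. (x, y) \<in> G1 \<and> inner x y \<ge> 0 \<longrightarrow>
    Zfun R j E h x y \<le> ennreal (C * norm (x + y) ^ CARD('n) *
      exp (\<eta> * (1 - \<delta> / 2) * ((norm x)\<^sup>2 - (norm y)\<^sup>2) - \<eta> * \<delta> / 2 * norm (x + y) * norm (x - y)))"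
proof -
  define \<alpha> where "\<alpha> = \<eta> * \<delta> / 4"
  define k where "k = real CARD('n) / 2 + 1"
  define K where "K = C0 powr \<eta> / sqrt (1 - \<eta>)"
  define C where "C = K * (3 * (exp (2 * \<alpha>) * (k / \<alpha>) powr k) / \<alpha> + 2 powr k)"
  have \<alpha>: "0 < \<alpha>" and K: "0 < K"
    using \<eta> \<delta>_pos C0_pos by (auto simp: \<alpha>_def K_def)
  then have C: "0 < C"
    by (simp add: C_def add_nonneg_pos)
  have "Zfun R j E h x y \<le> ennreal (C * norm (x + y) ^ CARD('n) *
      exp (\<eta> * (1 - \<delta> / 2) * ((norm x)\<^sup>2 - (norm y)\<^sup>2) - \<eta> * \<delta> / 2 * norm (x + y) * norm (x - y)))"
    if xy: "(x, y) \<in> G1" "0 \<le> inner x y" for x y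
  proof -
    define a where "a = norm (x - y)"
    define b where "b = norm (x + y)"
    define T where "T = \<eta> * (1 - \<delta> / 2) * ((norm x)\<^sup>2 - (norm y)\<^sup>2) - \<eta> * \<delta> / 2 * b * a"
    define g where "g u = exp (-u) * (tau_inv u powr (-k) * exp (-\<alpha> * (a - b * tau_inv u)\<^sup>2 / tau_inv u))"
      for u
    have pointwise: "\<bar>dhker R j u x y\<bar> / sqrt (u + h) \<le> K * exp T * g u" if u: "u \<in> E" for u
    proof -
      define s where "s = tau_inv u"
      have s: "0 < s"
        using u E_pos tau_inv_pos by (auto simp: s_def)
      have "\<eta> * ((norm x)\<^sup>2 - (norm y)\<^sup>2 - \<delta> / (4 * s) * Qs s x y) = T - \<alpha> * ((a - b * s)\<^sup>2 / s)"
        unfolding exponent_eq_acute[OF s] T_def \<alpha>_def a_def b_def ..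
      then have "exp (\<eta> * ((norm x)\<^sup>2 - (norm y)\<^sup>2 - \<delta> / (4 * s) * Qs s x y)) =
          exp T * exp (-\<alpha> * (a - b * s)\<^sup>2 / s)"
        by (simp flip: exp_add)
      then show ?thesis
        using dhker_integrand_le[OF u \<eta>, of j x y]
        by (simp add: K_def k_def g_def s_def mult_ac)
    qed
    have "Zfun R j E h x y \<le> (\<integral>\<^sup>+ u \<in> {0<..}. ennreal (K * exp T * g u) \<partial>lborel)"
      by (rule Zfun_le_nn_integral[OF E_pos pointwise])
    also have "\<dots> = ennreal (K * exp T) * (\<integral>\<^sup>+ u \<in> {0<..}. ennreal (g u) \<partial>lborel)"
      using K
      by (subst nn_integral_cmult[symmetric])
        (unfold g_def, measurable, auto simp: ennreal_mult mult.assoc intro!: nn_integral_cong)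
    also have "\<dots> \<le> ennreal (K * exp T) *
        ennreal ((3 * (exp (2 * \<alpha>) * (k / \<alpha>) powr k) / \<alpha> + 2 powr k) * b ^ CARD('n))"
      using G1_acute_bounds[OF xy] \<alpha>
      unfolding g_def k_def a_def b_def
      by (intro mult_left_mono nn_integral_exp_neg_tau_inv_gaussian_le) (auto simp: mult.commute)
    also have "\<dots> = ennreal (C * b ^ CARD('n) * exp T)"
      using K \<alpha> by (subst ennreal_mult[symmetric]) (auto simp: C_def b_def mult_ac)
    finally show ?thesis
      unfolding T_def a_def b_def .
  qed
  with C show ?thesis by blast
qed

end

theorem mainTheorem9:
  fixes R :: "real^'n^'n" and p \<delta> h C0 :: real and j :: 'n and E :: "real set"
  assumes skew: "transpose R = - R"
    and p: "1 < p"
    and \<delta>1: "max (1 - 1 / real CARD('n)) (1 - 1 / p) < \<delta>" and \<delta>2: "\<delta> < 1"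
    and h: "0 \<le> h"
    and Esub: "E \<subseteq> {0<..}" and Emeas: "E \<in> sets lebesgue"
    and C0: "0 < C0"
    and bound: "\<And>x y s. 0 < s \<Longrightarrow> s < 1 \<Longrightarrow> tau s \<in> E \<Longrightarrow>
        hker R (tau s) x y \<le> C0 * s powr (- real CARD('n) / 2) *
          exp ((norm x)\<^sup>2 - (norm y)\<^sup>2 - \<delta> / (4 * s) * Qs s x y)"
  shows "(\<forall>\<eta>. 0 < \<eta> \<and> \<eta> < 1 \<longrightarrow> (\<exists>C>0. \<forall>x y. (x, y) \<in> G1 \<and> inner x y < 0 \<longrightarrow>
            Zfun R j E h x y \<le> ennreal (C * exp (\<eta> * (1 - \<delta>) * (norm x)\<^sup>2 - \<eta> * (norm y)\<^sup>2))))
       \<and> (\<forall>\<eta>. 0 < \<eta> \<and> \<eta> < 1 \<and> \<eta> * \<delta> > 1 - 1 / real CARD('n) \<longrightarrow>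
            (\<exists>C>0. \<forall>x y. (x, y) \<in> G1 \<and> inner x y \<ge> 0 \<longrightarrow>
            Zfun R j E h x y \<le> ennreal (C * norm (x + y) ^ CARD('n) *
              exp (\<eta> * (1 - \<delta> / 2) * ((norm x)\<^sup>2 - (norm y)\<^sup>2)
                   - \<eta> * \<delta> / 2 * norm (x + y) * norm (x - y)))))"
proof -
  \<comment> \<open>Both bounds only use \<open>\<delta> > 0\<close>.\<close>
  have "0 \<le> 1 - 1 / real CARD('n)"
    by simp
  then have "0 < \<delta>"
    using \<delta>1 by linarith
  then interpret hker_gaussian_bound R \<delta> h C0 E
    using skew h Esub C0 bound by unfold_locales
  show ?thesis
    using Zfun_le_obtuse[of _ j] Zfun_le_acute[of _ j] by blast
qed

end
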